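(* For all integers $n \ge 1$ and $0 \le m \le n-1$ we have $\widehat{C}_{n,m} \le \widehat{K}_{\star,m+1}(G_{n-1}^\infty) \le (n-1)!\,(m+1)^{n-1}$.
   Context: $\mathcal{K}_k^n = \{\prod_{s=1}^n [\frac{i_s-1}{k}, \frac{i_s}{k}] : i_s \in \{1,\dots,k\}\}$ (cubes dividing $I^n=[0,1]^n$); $\dim$ is topological dimension; a set $S\subset I^n$ connects some opposite faces of $I^n$ if it is connected and meets both $\{z_i=0\}$ and $\{z_i=1\}$ for some $i$; $\mathbb{Z}^{n-1}$ has the $\ell^\infty$ norm, $\mathbb{Z}^0=\{0\}$; a set $P\subset\mathbb{Z}^{n-1}$ is $1$-connected if any two points are joined by a finite chain in $P$ with consecutive $\ell^\infty$-distances $\le 1$. $\widehat{C}_{n,m}$ is the least constant $C>0$ such that: for every $k\in\mathbb{N}$ and every $F\colon\mathcal{K}_k^n\to\mathbb{Z}^{n-1}$ with $\|F(K_1)-F(K_2)\|_\infty\le 1$ whenever $\dim(K_1\cap K_2)\ge m$, there exist a $1$-connected $P\subset\mathbb{Z}^{n-1}$ with $|P|\le C$ and $\mathcal{S}\subset F^{-1}[P]$ with $\bigcup\mathcal{S}$ connecting some opposite faces of $I^n$. For a graph $G$ with graph distance and $m\in\mathbb{N}$: an $m$-distance clustered $N$-coloring is $f\colon V\to\{1,\dots,N\}$ such that for some $K_\star>0$, every connected component of the subgraph induced by each color class has at most $K_\star$ vertices and distinct components of the same color are at distance $>m$; $\chi_{\star,m}(G)$ is the least such $N$; $\widehat{K}_{\star,m}(G)$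 is the least $K_\star$ over $m$-distance clustered $\chi_{\star,m}(G)$-colorings. $G_{d}^\infty$ is the graph on $\mathbb{Z}^{d}$ with $x\sim y$ iff $\|x-y\|_\infty=1$ ($G_0^\infty$ is a single vertex). *)

theory Defs
  imports "HOL-Analysis.Analysis"
begin

text \<open>Z^d is represented by integer sequences vanishing from index d on;
  Z^0 is the single zero sequence.\<close>

definition Zsp :: "nat \<Rightarrow> (nat \<Rightarrow> int) set" where
  "Zsp d = {p. \<forall>i\<ge>d. p i = 0}"

definition linf :: "nat \<Rightarrow> (nat \<Rightarrow> int) \<Rightarrow> (nat \<Rightarrow> int) \<Rightarrow> int" where
  "linf d p q = Max (insert 0 {\<bar>p i - q i\<bar> | i. i < d})"

definition one_connected :: "nat \<Rightarrow> (nat \<Rightarrow> int) set \<Rightarrow> bool" where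
  "one_connected d P \<longleftrightarrow>
     (\<forall>p\<in>P. \<forall>q\<in>P. \<exists>xs. xs \<noteq> [] \<and> hd xs = p \<and> last xs = q \<and> set xs \<subseteq> P \<and>
        (\<forall>i. Suc i < length xs \<longrightarrow> linf d (xs ! i) (xs ! Suc i) \<le> 1))"

definition cubes :: "nat \<Rightarrow> (real^'n) set set" where
  "cubes k = {cbox (\<chi> s. (real (i s) - 1) / real k) (\<chi> s. real (i s) / real k) | i :: 'n \<Rightarrow> nat.
                 \<forall>s. 1 \<le> i s \<and> i s \<le> k}"

definition connects_faces :: "(real^'n) set \<Rightarrow> bool" where
  "connects_faces S \<longleftrightarrow> connected S \<and>
     (\<exists>i. (\<exists>z\<in>S. z $ i = 0) \<and> (\<exists>z\<in>S. z $ i = 1))"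

text \<open>Admissible constants C for C-hat_{n,m}, n = CARD('n).  The topological
  dimension of the intersection of two cubes (a convex set, possibly empty) is its
  affine dimension aff_dim (with aff_dim {} = -1).\<close>

definition Chat_ok :: "'n::finite itself \<Rightarrow> nat \<Rightarrow> real \<Rightarrow> bool" where
  "Chat_ok _ m C \<longleftrightarrow> C > 0 \<and>
     (\<forall>k::nat. k \<ge> 1 \<longrightarrow> (\<forall>F :: (real^'n) set \<Rightarrow> (nat \<Rightarrow> int).
        ((\<forall>K\<in>cubes k. F K \<in> Zsp (CARD('n) - 1)) \<and>
         (\<forall>K1\<in>cubes k. \<forall>K2\<in>cubes k. aff_dim (K1 \<inter> K2) \<ge> int m \<longrightarrow>
             linf (CARD('n) - 1) (F K1) (F K2) \<le> 1))
        \<longrightarrow> (\<exists>P. P \<subseteq> Zsp (CARD('n) - 1) \<and> one_connected (CARD('n) - 1) P \<and>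
               finite P \<and> real (card P) \<le> C \<and>
               (\<exists>S. S \<subseteq> cubes k \<and> (\<forall>K\<in>S. F K \<in> P) \<and> connects_faces (\<Union>S)))))"

definition Chat :: "'n::finite itself \<Rightarrow> nat \<Rightarrow> real" where
  "Chat T m = Inf {C. Chat_ok T m C}"

definition walk_len :: "'a set \<Rightarrow> ('a \<Rightarrow> 'a \<Rightarrow> bool) \<Rightarrow> nat \<Rightarrow> 'a \<Rightarrow> 'a \<Rightarrow> bool" where
  "walk_len V E r x y \<longleftrightarrow> (\<exists>w :: nat \<Rightarrow> 'a. w 0 = x \<and> w r = y \<and> (\<forall>i\<le>r. w i \<in> V) \<and>
      (\<forall>i<r. E (w i) (w (Suc i))))"

definition gdist_le :: "'a set \<Rightarrow> ('a \<Rightarrow> 'a \<Rightarrow> bool) \<Rightarrow> nat \<Rightarrow> 'a \<Rightarrow> 'a \<Rightarrow> bool" where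
  "gdist_le V E r x y \<longleftrightarrow> (\<exists>l\<le>r. walk_len V E l x y)"

definition colour_comp :: "'a set \<Rightarrow> ('a \<Rightarrow> 'a \<Rightarrow> bool) \<Rightarrow> ('a \<Rightarrow> nat) \<Rightarrow> 'a \<Rightarrow> 'a set" where
  "colour_comp V E f x = {y. \<exists>l. walk_len {v\<in>V. f v = f x} E l x y}"

definition clustered_col :: "'a set \<Rightarrow> ('a \<Rightarrow> 'a \<Rightarrow> bool) \<Rightarrow> nat \<Rightarrow> nat \<Rightarrow> real \<Rightarrow> ('a \<Rightarrow> nat) \<Rightarrow> bool" where
  "clustered_col V E m N K f \<longleftrightarrow> K > 0 \<and>
     (\<forall>x\<in>V. f x \<in> {1..N}) \<and>
     (\<forall>x\<in>V. finite (colour_comp V E f x) \<and> real (card (colour_comp V E f x)) \<le> K) \<and>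
     (\<forall>x\<in>V. \<forall>y\<in>V. f x = f y \<and> colour_comp V E f x \<noteq> colour_comp V E f y \<longrightarrow>
        \<not> gdist_le V E m x y)"

definition chi_star :: "'a set \<Rightarrow> ('a \<Rightarrow> 'a \<Rightarrow> bool) \<Rightarrow> nat \<Rightarrow> nat" where
  "chi_star V E m = (LEAST N. \<exists>K f. clustered_col V E m N K f)"

definition Khat_ok :: "'a set \<Rightarrow> ('a \<Rightarrow> 'a \<Rightarrow> bool) \<Rightarrow> nat \<Rightarrow> real \<Rightarrow> bool" where
  "Khat_ok V E m K \<longleftrightarrow> (\<exists>f. clustered_col V E m (chi_star V E m) K f)"

definition Khat :: "'a set \<Rightarrow> ('a \<Rightarrow> 'a \<Rightarrow> bool) \<Rightarrow> nat \<Rightarrow> real" where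
  "Khat V E m = Inf {K. Khat_ok V E m K}"

definition Ginf_adj :: "nat \<Rightarrow> (nat \<Rightarrow> int) \<Rightarrow> (nat \<Rightarrow> int) \<Rightarrow> bool" where
  "Ginf_adj d p q \<longleftrightarrow> linf d p q = 1"

end

theory Submission
  imports Defs
begin

text \<open>The bound \<open>C\<^sub>n\<^sub>,\<^sub>m \<le> K\<close>: given an \<open>n\<close>-colouring of \<open>\<int>\<^sup>n\<^sup>-\<^sup>1\<close> whose clusters have at most \<open>K\<close>
  points and are more than \<open>m + 1\<close> apart, colour each cube of the subdivision by the colour of its
  image under \<open>F\<close>.  The \<open>n\<close>-dimensional Hex theorem, a consequence of Poincare-Miranda, yields a
  chain of touching cubes of one colour \<open>i\<close> joining the faces \<open>z\<^sub>i = 0\<close> and \<open>z\<^sub>i = 1\<close>.  Touching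
  cubes are joined by at most \<open>m + 1\<close> steps through cubes sharing \<open>m\<close>-dimensional faces, so their
  images are at distance at most \<open>m + 1\<close> and therefore lie in the same cluster, which is the
  required set \<open>P\<close>.  The same Hex argument shows that \<open>n - 1\<close> colours never give bounded clusters,
  so \<open>\<chi>\<^sub>\<star>\<^sub>,\<^sub>m\<^sub>+\<^sub>1(G\<^sup>\<infinity>\<^sub>n\<^sub>-\<^sub>1) = n\<close>.

  The bound \<open>K \<le> (n - 1)! (m + 1)\<^sup>n\<^sup>-\<^sup>1\<close> comes from an explicit colouring of \<open>\<int>\<^sup>d\<close> by \<open>d + 1\<close> colours
  whose clusters are staggered bricks of size \<open>r \<times> 2r \<times> \<dots> \<times> d r\<close>, with \<open>r = m + 1\<close>.\<close>

lemma linf_altdef: "linf d p q = Max (insert 0 ((\<lambda>i. \<bar>p i - q i\<bar>) ` {..<d}))"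
  unfolding linf_def by (rule arg_cong[where f = "\<lambda>A. Max (insert 0 A)"]) auto

lemma linf_le_iff: "linf d p q \<le> c \<longleftrightarrow> 0 \<le> c \<and> (\<forall>i<d. \<bar>p i - q i\<bar> \<le> c)"
  unfolding linf_altdef by (subst Max_le_iff) auto

lemma abs_le_linf: "i < d \<Longrightarrow> \<bar>p i - q i\<bar> \<le> linf d p q"
  unfolding linf_altdef by (rule Max_ge) auto

lemma linf_nonneg: "0 \<le> linf d p q"
  unfolding linf_altdef by (rule Max_ge) auto

lemma linf_attained:
  assumes "0 < linf d p q"
  obtains i where "i < d" "\<bar>p i - q i\<bar> = linf d p q"
proof -
  have "linf d p q \<in> insert 0 ((\<lambda>i. \<bar>p i - q i\<bar>) ` {..<d})"
    unfolding linf_altdef by (rule Max_in) auto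
  with assms that show ?thesis by auto
qed

lemma linf_commute: "linf d p q = linf d q p"
  unfolding linf_altdef by (simp add: abs_minus_commute)

lemma linf_self [simp]: "linf d p p = 0"
  using linf_nonneg[of d p p] by (simp add: linf_le_iff order_antisym_conv)

lemma linf_triangle: "linf d p r \<le> linf d p q + linf d q r"
proof -
  have "\<bar>p i - r i\<bar> \<le> linf d p q + linf d q r" if "i < d" for i
    using abs_le_linf[OF that, of p q] abs_le_linf[OF that, of q r] by linarith
  then show ?thesis
    using linf_nonneg[of d p q] linf_nonneg[of d q r] by (simp add: linf_le_iff)
qed

lemma linf_eq_0_iff:
  assumes "p \<in> Zsp d" "q \<in> Zsp d"
  shows "linf d p q = 0 \<longleftrightarrow> p = q"
proof
  assume "linf d p q = 0"
  then have "p i = q i" for i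
    using abs_le_linf[of i d p q] assms by (cases "i < d") (auto simp: Zsp_def)
  then show "p = q" ..
qed simp

lemma symp_Ginf_adj: "symp (Ginf_adj d)"
  by (rule sympI) (simp add: Ginf_adj_def linf_commute)

lemma Ginf_adj_iff:
  assumes "p \<in> Zsp d" "q \<in> Zsp d"
  shows "Ginf_adj d p q \<longleftrightarrow> linf d p q \<le> 1 \<and> p \<noteq> q"
  using linf_eq_0_iff[OF assms] linf_nonneg[of d p q] unfolding Ginf_adj_def by linarith

lemma walk_len_refl: "x \<in> V \<Longrightarrow> walk_len V E 0 x x"
  unfolding walk_len_def by (rule exI[of _ "\<lambda>_. x"]) auto

lemma walk_len_edge: "x \<in> V \<Longrightarrow> y \<in> V \<Longrightarrow> E x y \<Longrightarrow> walk_len V E 1 x y"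
  unfolding walk_len_def by (rule exI[of _ "\<lambda>i. if i = 0 then x else y"]) auto

lemma walk_len_endpoints: "walk_len V E l x y \<Longrightarrow> x \<in> V \<and> y \<in> V"
  unfolding walk_len_def by (metis le0 order_refl)

lemma walk_len_mono: "walk_len V E l x y \<Longrightarrow> V \<subseteq> V' \<Longrightarrow> walk_len V' E l x y"
  unfolding walk_len_def by blast

lemma walk_len_append:
  assumes "walk_len V E l x y" "walk_len V E l' y z"
  shows "walk_len V E (l + l') x z"
proof -
  obtain w where w: "w 0 = x" "w l = y" "\<forall>i\<le>l. w i \<in> V" "\<forall>i<l. E (w i) (w (Suc i))"
    using assms(1) unfolding walk_len_def by blast
  obtain w' where w': "w' 0 = y" "w' l' = z" "\<forall>i\<le>l'. w' i \<in> V" "\<forall>i<l'. E (w' i) (w' (Suc i))"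
    using assms(2) unfolding walk_len_def by blast
  define v where "v i = (if i \<le> l then w i else w' (i - l))" for i
  have "E (v i) (v (Suc i))" if "i < l + l'" for i
  proof (cases "i < l")
    case False
    then have "Suc i - l = Suc (i - l)" by simp
    with False that w(2) w'(1,4) show ?thesis
      by (cases "i = l") (auto simp: v_def)
  qed (use w(4) in \<open>auto simp: v_def\<close>)
  moreover have "v 0 = x" "v (l + l') = z"
    using w(1,2) w'(1,2) by (auto simp: v_def)
  moreover have "\<forall>i\<le>l + l'. v i \<in> V"
    using w(3) w'(3) by (simp add: v_def)
  ultimately show ?thesis
    unfolding walk_len_def by blast
qed

lemma walk_len_rev:
  assumes "walk_len V E l x y" "symp E"
  shows "walk_len V E l y x"
proof -
  obtain w where w: "w 0 = x" "w l = y" "\<forall>i\<le>l. w i \<in> V" "\<forall>i<l. E (w i) (w (Suc i))"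
    using assms(1) unfolding walk_len_def by blast
  have "E (w (l - i)) (w (l - Suc i))" if "i < l" for i
    using w(4)[rule_format, of "l - Suc i"] that assms(2) Suc_diff_Suc[OF that]
    by (auto dest: sympD)
  with w show ?thesis
    unfolding walk_len_def by (intro exI[of _ "\<lambda>i. w (l - i)"]) auto
qed

lemma walk_len_prefixes:
  assumes "walk_len V E l x y"
  obtains w where "w 0 = x" "w l = y" "\<forall>i<l. E (w i) (w (Suc i))"
    "\<forall>j\<le>l. walk_len V E j x (w j)"
proof -
  obtain w where w: "w 0 = x" "w l = y" "\<forall>i\<le>l. w i \<in> V" "\<forall>i<l. E (w i) (w (Suc i))"
    using assms unfolding walk_len_def by blast
  then have "walk_len V E j x (w j)" if "j \<le> l" for j
    unfolding walk_len_def using that by (intro exI[of _ w]) auto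
  with w that show ?thesis by blast
qed

lemma walk_len_invariant:
  assumes "walk_len V E l x y" "x \<in> S"
    and "\<And>a b. a \<in> V \<Longrightarrow> b \<in> V \<Longrightarrow> E a b \<Longrightarrow> a \<in> S \<Longrightarrow> b \<in> S"
  shows "y \<in> S"
proof -
  obtain w where w: "w 0 = x" "w l = y" "\<forall>i\<le>l. w i \<in> V" "\<forall>i<l. E (w i) (w (Suc i))"
    using assms(1) unfolding walk_len_def by blast
  have "w j \<in> S" if "j \<le> l" for j
    using that
  proof (induction j)
    case (Suc j)
    then show ?case
      using w(3,4) assms(3)[of "w j" "w (Suc j)"] by simp
  qed (simp add: w(1) assms(2))
  with w(2) show ?thesis by blast
qed

lemma linf_le_walk_len:
  assumes "walk_len V (Ginf_adj d) l x y"
  shows "linf d x y \<le> int l"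
proof -
  obtain w where w: "w 0 = x" "w l = y" "\<forall>i<l. Ginf_adj d (w i) (w (Suc i))"
    using assms unfolding walk_len_def by blast
  have "linf d x (w j) \<le> int j" if "j \<le> l" for j
    using that
  proof (induction j)
    case (Suc j)
    then have "linf d (w j) (w (Suc j)) = 1"
      using w(3) by (simp add: Ginf_adj_def)
    with Suc show ?case
      using linf_triangle[of d x "w (Suc j)" "w j"] by simp
  qed (simp add: w(1))
  with w(2) show ?thesis by blast
qed

lemma straight_walk:
  assumes p: "p \<in> Zsp d" and q: "q \<in> Zsp d"
  shows "walk_len {z \<in> Zsp d. \<forall>i<d. min (p i) (q i) \<le> z i \<and> z i \<le> max (p i) (q i)}
           (Ginf_adj d) (nat (linf d p q)) p q"
proof -
  define L where "L = nat (linf d p q)"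
  have L: "int L = linf d p q"
    using linf_nonneg[of d p q] by (simp add: L_def)
  define w where "w j i = (if i < d then p i + max (- int j) (min (int j) (q i - p i)) else 0)" for j i
  have "w 0 = p"
    using p by (auto simp: w_def Zsp_def)
  moreover have "w L = q"
  proof
    fix i
    show "w L i = q i"
      using q abs_le_linf[of i d q p] L by (auto simp: w_def Zsp_def linf_commute)
  qed
  moreover have "w j \<in> {z \<in> Zsp d. \<forall>i<d. min (p i) (q i) \<le> z i \<and> z i \<le> max (p i) (q i)}" for j
    by (auto simp: w_def Zsp_def)
  moreover have "Ginf_adj d (w j) (w (Suc j))" if "j < L" for j
  proof -
    obtain i0 where "i0 < d" "\<bar>p i0 - q i0\<bar> = int L"
      using linf_attained[of d p q] L \<open>j < L\<close> by auto
    with \<open>j < L\<close> have "w j i0 \<noteq> w (Suc j) i0"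
      by (auto simp: w_def)
    moreover have "linf d (w j) (w (Suc j)) \<le> 1"
      by (auto simp: linf_le_iff w_def)
    moreover have "w j \<in> Zsp d" for j
      by (simp add: w_def Zsp_def)
    ultimately show ?thesis
      by (auto simp: Ginf_adj_iff)
  qed
  ultimately show ?thesis
    unfolding walk_len_def L_def[symmetric] by blast
qed

lemma gdist_le_if_linf_le:
  assumes "p \<in> Zsp d" "q \<in> Zsp d" "linf d p q \<le> int r"
  shows "gdist_le (Zsp d) (Ginf_adj d) r p q"
  using walk_len_mono[OF straight_walk[OF assms(1,2)]] assms(3)
  unfolding gdist_le_def by (intro exI[of _ "nat (linf d p q)"]) auto

lemma colour_comp_self: "x \<in> V \<Longrightarrow> x \<in> colour_comp V E f x"
  unfolding colour_comp_def by (auto intro: walk_len_refl)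

lemma colour_compD: "y \<in> colour_comp V E f x \<Longrightarrow> y \<in> V \<and> f y = f x"
  unfolding colour_comp_def by (auto dest: walk_len_endpoints)

lemma colour_comp_trans:
  assumes "y \<in> colour_comp V E f x" "z \<in> colour_comp V E f y"
  shows "z \<in> colour_comp V E f x"
proof -
  have "f y = f x"
    using colour_compD[OF assms(1)] by simp
  then obtain l l' where "walk_len {v\<in>V. f v = f x} E l x y" "walk_len {v\<in>V. f v = f x} E l' y z"
    using assms unfolding colour_comp_def by auto
  then have "walk_len {v\<in>V. f v = f x} E (l + l') x z"
    by (rule walk_len_append)
  then show ?thesis
    unfolding colour_comp_def by blast
qed

lemma colour_comp_eq:
  assumes "y \<in> colour_comp V E f x" "symp E"
  shows "colour_comp V E f y = colour_comp V E f x"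
proof -
  have "f y = f x"
    using colour_compD[OF assms(1)] by simp
  obtain l where "walk_len {v\<in>V. f v = f x} E l x y"
    using assms(1) unfolding colour_comp_def by blast
  then have "walk_len {v\<in>V. f v = f x} E l y x"
    using assms(2) by (rule walk_len_rev)
  then have "x \<in> colour_comp V E f y"
    unfolding colour_comp_def \<open>f y = f x\<close> by blast
  then show ?thesis
    using colour_comp_trans[OF assms(1)] colour_comp_trans[of x V E f y] by blast
qed

lemma rtranclp_image_in_colour_comp:
  assumes "R\<^sup>*\<^sup>* a0 a" "g a0 \<in> V" "\<And>a b. R a b \<Longrightarrow> g b \<in> colour_comp V E f (g a)"
  shows "g a \<in> colour_comp V E f (g a0)"
  using assms(1)
proof (induction rule: rtranclp_induct)
  case base
  show ?case
    using assms(2) by (rule colour_comp_self)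
next
  case (step a b)
  show ?case
    by (rule colour_comp_trans[OF step(3) assms(3)[OF step(2)]])
qed

lemma colour_comp_if_linf_le_1:
  assumes "x \<in> Zsp d" "y \<in> Zsp d" "f y = f x" "linf d x y \<le> 1"
  shows "y \<in> colour_comp (Zsp d) (Ginf_adj d) f x"
proof (cases "x = y")
  case False
  then have "walk_len {v \<in> Zsp d. f v = f x} (Ginf_adj d) 1 x y"
    using assms Ginf_adj_iff by (intro walk_len_edge) auto
  then show ?thesis
    unfolding colour_comp_def by blast
qed (use assms(2) in \<open>auto intro: colour_comp_self\<close>)

lemma one_connected_colour_comp: "one_connected d (colour_comp V (Ginf_adj d) f x)"
  unfolding one_connected_def
proof (intro ballI)
  let ?C = "colour_comp V (Ginf_adj d) f x"
  fix p q assume p: "p \<in> ?C" and q: "q \<in> ?C"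
  then have "q \<in> colour_comp V (Ginf_adj d) f p"
    using colour_comp_eq[OF p symp_Ginf_adj] by blast
  then obtain l where "walk_len {v\<in>V. f v = f p} (Ginf_adj d) l p q"
    unfolding colour_comp_def by blast
  then obtain w where w: "w 0 = p" "w l = q" "\<forall>i<l. Ginf_adj d (w i) (w (Suc i))"
    "\<forall>j\<le>l. walk_len {v\<in>V. f v = f p} (Ginf_adj d) j p (w j)"
    by (rule walk_len_prefixes)
  have on_walk: "\<And>j. j \<le> l \<Longrightarrow> w j \<in> ?C"
    using w(4) colour_comp_trans[OF p] unfolding colour_comp_def by blast
  define xs where "xs = map w [0..<Suc l]"
  have xs: "length xs = Suc l" "\<And>i. i \<le> l \<Longrightarrow> xs ! i = w i"
    unfolding xs_def by (simp_all del: upt_Suc)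
  then have "xs \<noteq> []" by auto
  moreover have "hd xs = p" "last xs = q"
    using \<open>xs \<noteq> []\<close> xs w(1,2) by (simp_all add: hd_conv_nth last_conv_nth)
  moreover have "set xs \<subseteq> ?C"
    using on_walk xs by (auto simp: in_set_conv_nth)
  moreover have "\<forall>i. Suc i < length xs \<longrightarrow> linf d (xs ! i) (xs ! Suc i) \<le> 1"
    using w(3) xs by (simp add: Ginf_adj_def)
  ultimately show "\<exists>xs. xs \<noteq> [] \<and> hd xs = p \<and> last xs = q \<and> set xs \<subseteq> ?C \<and>
      (\<forall>i. Suc i < length xs \<longrightarrow> linf d (xs ! i) (xs ! Suc i) \<le> 1)"
    by blast
qed

lemma clustered_colD:
  assumes "clustered_col V E m N K f"
  shows "0 < K" "x \<in> V \<Longrightarrow> f x \<in> {1..N}"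
    "x \<in> V \<Longrightarrow> finite (colour_comp V E f x)"
    "x \<in> V \<Longrightarrow> real (card (colour_comp V E f x)) \<le> K"
    "x \<in> V \<Longrightarrow> y \<in> V \<Longrightarrow> f x = f y \<Longrightarrow> gdist_le V E m x y \<Longrightarrow>
       colour_comp V E f x = colour_comp V E f y"
  using assms unfolding clustered_col_def by blast+

lemma clustered_col_close_in_colour_comp:
  assumes "clustered_col V E r N K f" "x \<in> V" "y \<in> V" "f x = f y" "gdist_le V E r x y"
  shows "y \<in> colour_comp V E f x"
  using clustered_colD(5)[OF assms] colour_comp_self[OF assms(3)] by simp

section \<open>A colouring of \<open>\<int>\<^sup>d\<close> by \<open>d + 1\<close> colours with bounded separated clusters\<close>

lemma abs_div_diff_le_1:
  fixes u v M :: int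
  assumes "0 < M" "\<bar>v - u\<bar> \<le> M"
  shows "\<bar>v div M - u div M\<bar> \<le> 1"
proof -
  have "v div M \<le> (u + M) div M" "u div M \<le> (v + M) div M"
    by (rule zdiv_mono1; use assms in \<open>simp add: abs_le_iff\<close>)+
  moreover have "(u + M) div M = u div M + 1" "(v + M) div M = v div M + 1"
    using assms(1) by simp_all
  ultimately show ?thesis
    by linarith
qed

lemma div_diff_bounds:
  fixes u v D \<delta> :: int and r k :: nat
  assumes r: "r \<ge> 1" and "\<bar>\<delta>\<bar> \<le> int r" "\<bar>D\<bar> \<le> int k" and vu: "v - u = \<delta> + int r * D"
  defines "M \<equiv> int (Suc k * r)"
  shows "\<bar>v div M - u div M\<bar> \<le> 1" "0 < D \<Longrightarrow> u div M \<le> v div M" "D < 0 \<Longrightarrow> v div M \<le> u div M"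
proof -
  have "0 < Suc k * r"
    using r by simp
  then have M: "0 < M" "M = int r + int r * int k"
    unfolding M_def by (simp_all only: of_nat_0_less_iff) (simp add: algebra_simps)
  have "\<bar>int r * D\<bar> \<le> int r * int k"
    using assms(3) by (simp add: abs_mult mult_left_mono)
  then show "\<bar>v div M - u div M\<bar> \<le> 1"
    using M assms(2) vu by (intro abs_div_diff_le_1) auto
  show "u div M \<le> v div M" if "0 < D"
    using that assms(2) vu M(1) mult_left_mono[of 1 D "int r"] by (intro zdiv_mono1) auto
  show "v div M \<le> u div M" if "D < 0"
    using that assms(2) vu M(1) mult_left_mono[of D "-1" "int r"] by (intro zdiv_mono1) auto
qed

text \<open>Coordinate \<open>k\<close> is cut into blocks of length \<open>(k + 1) r\<close>, shifted by \<open>r\<close> times the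
  sum of the block numbers of the earlier coordinates; \<open>brick_offset r p k\<close> is that sum.\<close>
fun brick_offset :: "nat \<Rightarrow> (nat \<Rightarrow> int) \<Rightarrow> nat \<Rightarrow> int" where
  "brick_offset r p 0 = 0"
| "brick_offset r p (Suc k) =
     brick_offset r p k + (p k + int r * brick_offset r p k) div int (Suc k * r)"

lemma brick_offset_diff:
  assumes r: "r \<ge> 1" and close: "\<forall>i<k. \<bar>q i - p i\<bar> \<le> int r"
  shows "(\<forall>j\<le>k. brick_offset r q j = brick_offset r p j) \<or>
    (0 < \<bar>brick_offset r q k - brick_offset r p k\<bar> \<and> \<bar>brick_offset r q k - brick_offset r p k\<bar> \<le> int k)"
  using close
proof (induction k)
  case (Suc k)
  define M where "M = int (Suc k * r)"
  define u where "u = p k + int r * brick_offset r p k"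
  define v where "v = q k + int r * brick_offset r q k"
  define D where "D = brick_offset r q k - brick_offset r p k"
  have step: "brick_offset r q (Suc k) - brick_offset r p (Suc k) = D + (v div M - u div M)"
    by (simp add: u_def v_def D_def M_def)
  have IH: "(\<forall>j\<le>k. brick_offset r q j = brick_offset r p j) \<or> (D \<noteq> 0 \<and> \<bar>D\<bar> \<le> int k)"
    using Suc by (auto simp: D_def)
  then have "\<bar>D\<bar> \<le> int k"
    by (auto simp: D_def)
  moreover have "v - u = (q k - p k) + int r * D" "\<bar>q k - p k\<bar> \<le> int r"
    using Suc.prems by (simp_all add: u_def v_def D_def algebra_simps)
  ultimately have E: "\<bar>v div M - u div M\<bar> \<le> 1" "0 < D \<Longrightarrow> u div M \<le> v div M"
    "D < 0 \<Longrightarrow> v div M \<le> u div M"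
    unfolding M_def using div_diff_bounds[OF r] by blast+
  from IH show ?case
  proof
    assume eq: "\<forall>j\<le>k. brick_offset r q j = brick_offset r p j"
    then have "D = 0"
      by (simp add: D_def)
    with eq E(1) step show ?thesis
      by (cases "v div M = u div M") (auto simp: le_Suc_eq)
  next
    assume "D \<noteq> 0 \<and> \<bar>D\<bar> \<le> int k"
    with E step show ?thesis
      by (cases "0 < D") auto
  qed
qed simp

text \<open>Offsets of points at distance at most \<open>r\<close> differ by at most \<open>d\<close> at level \<open>d\<close>, so their
  residues modulo \<open>d + 1\<close> already decide whether all offsets agree.\<close>
definition brick_colour :: "nat \<Rightarrow> nat \<Rightarrow> (nat \<Rightarrow> int) \<Rightarrow> nat" where
  "brick_colour d r p = nat (brick_offset r p d mod int (Suc d)) + 1"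

lemma brick_colour_range: "brick_colour d r p \<in> {1..Suc d}"
proof -
  let ?m = "brick_offset r p d mod int (Suc d)"
  have "nat ?m < Suc d"
    using nat_less_iff[of ?m "Suc d"] by simp
  then show ?thesis
    unfolding brick_colour_def by simp
qed

lemma brick_offset_eq_if_close:
  assumes r: "r \<ge> 1" and close: "linf d p q \<le> int r"
    and colour: "brick_colour d r p = brick_colour d r q"
  shows "\<forall>j\<le>d. brick_offset r q j = brick_offset r p j"
proof -
  let ?D = "brick_offset r q d - brick_offset r p d"
  have "linf d q p \<le> int r"
    using close by (simp add: linf_commute)
  then have "\<forall>i<d. \<bar>q i - p i\<bar> \<le> int r"
    by (auto intro: order_trans[OF abs_le_linf])
  moreover have "int (Suc d) dvd ?D"
    using colour by (simp add: brick_colour_def eq_nat_nat_iff mod_eq_dvd_iff dvd_diff_commute)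
  then have "\<not> (0 < \<bar>?D\<bar> \<and> \<bar>?D\<bar> \<le> int d)"
    using dvd_imp_le_int[of ?D "int (Suc d)"] by auto
  ultimately show ?thesis
    using brick_offset_diff[OF r] by blast
qed

lemma brick_offset_eq_between:
  assumes r: "r \<ge> 1" and eq: "\<forall>j\<le>d. brick_offset r q j = brick_offset r p j"
    and between: "\<forall>i<d. min (p i) (q i) \<le> z i \<and> z i \<le> max (p i) (q i)"
  shows "\<forall>j\<le>d. brick_offset r z j = brick_offset r p j"
proof (intro allI impI)
  fix j assume "j \<le> d"
  then show "brick_offset r z j = brick_offset r p j"
  proof (induction j)
    case (Suc j)
    define M where "M = int (Suc j * r)"
    define c where "c = int r * brick_offset r p j"
    have "0 < Suc j * r"
      using r by simp
    then have M: "0 < M"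
      unfolding M_def by (simp only: of_nat_0_less_iff)
    have "brick_offset r q j = brick_offset r p j" "brick_offset r q (Suc j) = brick_offset r p (Suc j)"
      using eq Suc.prems by (blast intro: Suc_leD)+
    moreover have "brick_offset r s (Suc j) = brick_offset r s j + (s j + int r * brick_offset r s j) div M"
      for s
      by (simp only: brick_offset.simps M_def)
    ultimately have "(q j + c) div M = (p j + c) div M"
      unfolding c_def by (metis add_left_cancel)
    moreover have "min (p j) (q j) \<le> z j \<and> z j \<le> max (p j) (q j)"
      using between Suc.prems by simp
    ultimately have "(z j + c) div M = (p j + c) div M"
      using zdiv_mono1[OF _ M, of "p j + c" "z j + c"] zdiv_mono1[OF _ M, of "z j + c" "p j + c"]
        zdiv_mono1[OF _ M, of "q j + c" "z j + c"] zdiv_mono1[OF _ M, of "z j + c" "q j + c"]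
      by (cases "p j \<le> q j") auto
    then show ?case
      using Suc by (simp add: M_def c_def)
  qed simp
qed

definition brick :: "nat \<Rightarrow> nat \<Rightarrow> (nat \<Rightarrow> int) \<Rightarrow> (nat \<Rightarrow> int) set" where
  "brick d r x = {z \<in> Zsp d. \<forall>j\<le>d. brick_offset r z j = brick_offset r x j}"

lemma brick_coordinate_interval:
  assumes r: "r \<ge> 1" and k: "k < d"
  obtains lo where "\<And>z. z \<in> brick d r x \<Longrightarrow> z k \<in> {lo..<lo + int (Suc k * r)}"
proof
  define M where "M = int (Suc k * r)"
  define c where "c = int r * brick_offset r x k"
  have M: "0 < M"
    using r unfolding M_def by (simp only: of_nat_0_less_iff) simp
  fix z assume "z \<in> brick d r x"
  then have "\<forall>j\<le>d. brick_offset r z j = brick_offset r x j"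
    by (simp add: brick_def)
  then have "brick_offset r z k = brick_offset r x k" "brick_offset r z (Suc k) = brick_offset r x (Suc k)"
    using k by (meson Suc_leI less_imp_le)+
  moreover have "brick_offset r s (Suc k) = brick_offset r s k + (s k + int r * brick_offset r s k) div M"
    for s
    by (simp only: brick_offset.simps M_def)
  ultimately have "(z k + c) div M = (x k + c) div M"
    unfolding c_def by (metis add_left_cancel)
  moreover have "M * ((z k + c) div M) + (z k + c) mod M = z k + c"
    by (rule mult_div_mod_eq)
  moreover have "0 \<le> (z k + c) mod M" "(z k + c) mod M < M"
    using M by simp_all
  ultimately show "z k \<in> {M * ((x k + c) div M) - c..<M * ((x k + c) div M) - c + int (Suc k * r)}"
    unfolding M_def by auto
qed

lemma brick_card:
  assumes r: "r \<ge> 1"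
  shows "finite (brick d r x) \<and> card (brick d r x) \<le> fact d * r ^ d"
proof -
  have "\<forall>k. \<exists>lo. k < d \<longrightarrow> (\<forall>z\<in>brick d r x. z k \<in> {lo..<lo + int (Suc k * r)})"
    using brick_coordinate_interval[OF r] by metis
  then obtain lo where lo: "\<And>k z. k < d \<Longrightarrow> z \<in> brick d r x \<Longrightarrow> z k \<in> {lo k..<lo k + int (Suc k * r)}"
    by metis
  define I where "I k = {lo k..<lo k + int (Suc k * r)}" for k
  have inj: "inj_on (\<lambda>z. restrict z {..<d}) (brick d r x)"
  proof
    fix z z' assume "z \<in> brick d r x" "z' \<in> brick d r x" "restrict z {..<d} = restrict z' {..<d}"
    then have "z i = z' i" for i
      by (cases "i < d") (auto simp: brick_def Zsp_def dest: fun_cong[of _ _ i])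
    then show "z = z'" ..
  qed
  have sub: "(\<lambda>z. restrict z {..<d}) ` brick d r x \<subseteq> PiE {..<d} I"
    using lo unfolding I_def by (intro image_subsetI) (simp only: restrict_PiE_iff lessThan_iff, blast)
  have "card (I k) = Suc k * r" for k
    unfolding I_def by (simp only: card_atLeastLessThan_int add_diff_cancel_left' nat_int)
  then have "card (PiE {..<d} I) = (\<Prod>k<d. Suc k * r)"
    by (simp add: card_PiE)
  also have "\<dots> = fact d * r ^ d"
    by (simp only: prod.distrib fact_prod_Suc atLeast0LessThan prod_constant card_lessThan of_nat_id)
  finally have "card (PiE {..<d} I) = fact d * r ^ d" .
  moreover have "finite (PiE {..<d} I)"
    by (simp add: I_def finite_PiE)
  ultimately show ?thesis
    using inj sub card_mono[OF _ sub] card_image[OF inj]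
    by (metis finite_imageD finite_subset)
qed

text \<open>Inside a brick the offsets are constant along the straight walk between two points, and a step
  of a monochromatic walk never changes them, so the clusters are exactly the bricks.\<close>
lemma colour_comp_brick_colour:
  assumes r: "r \<ge> 1" and x: "x \<in> Zsp d"
  shows "colour_comp (Zsp d) (Ginf_adj d) (brick_colour d r) x = brick d r x"
proof
  let ?V = "{v \<in> Zsp d. brick_colour d r v = brick_colour d r x}"
  show "colour_comp (Zsp d) (Ginf_adj d) (brick_colour d r) x \<subseteq> brick d r x"
  proof
    fix y assume "y \<in> colour_comp (Zsp d) (Ginf_adj d) (brick_colour d r) x"
    then obtain l where "walk_len ?V (Ginf_adj d) l x y"
      unfolding colour_comp_def by blast
    moreover have "x \<in> brick d r x"
      using x by (simp add: brick_def)
    moreover have "b \<in> brick d r x"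
      if "a \<in> ?V" "b \<in> ?V" "Ginf_adj d a b" "a \<in> brick d r x" for a b
    proof -
      have "linf d a b \<le> int r"
        using that(3) r by (simp add: Ginf_adj_def)
      then have "\<forall>j\<le>d. brick_offset r b j = brick_offset r a j"
        using that(1,2) by (intro brick_offset_eq_if_close[OF r]) simp_all
      with that(2,4) show ?thesis
        by (simp add: brick_def)
    qed
    ultimately show "y \<in> brick d r x"
      by (rule walk_len_invariant)
  qed
  show "brick d r x \<subseteq> colour_comp (Zsp d) (Ginf_adj d) (brick_colour d r) x"
  proof
    fix y assume y: "y \<in> brick d r x"
    have "{z \<in> Zsp d. \<forall>i<d. min (x i) (y i) \<le> z i \<and> z i \<le> max (x i) (y i)} \<subseteq> ?V"
    proof safe
      fix z assume "z \<in> Zsp d" "\<forall>i<d. min (x i) (y i) \<le> z i \<and> z i \<le> max (x i) (y i)"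
      moreover have "\<forall>j\<le>d. brick_offset r y j = brick_offset r x j"
        using y by (simp add: brick_def)
      ultimately have "brick_offset r z d = brick_offset r x d"
        using brick_offset_eq_between[OF r, of d y x z] by blast
      then show "brick_colour d r z = brick_colour d r x"
        by (simp add: brick_colour_def)
    qed
    then have "walk_len ?V (Ginf_adj d) (nat (linf d x y)) x y"
      using y by (intro walk_len_mono[OF straight_walk[OF x]]) (auto simp: brick_def)
    then show "y \<in> colour_comp (Zsp d) (Ginf_adj d) (brick_colour d r) x"
      unfolding colour_comp_def by blast
  qed
qed

lemma brick_colour_clustered:
  assumes r: "r \<ge> 1"
  shows "clustered_col (Zsp d) (Ginf_adj d) r (Suc d) (fact d * real r ^ d) (brick_colour d r)"
  unfolding clustered_col_def
proof (intro conjI ballI impI)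
  show "0 < fact d * real r ^ d"
    using r by simp
  fix x assume x: "x \<in> Zsp d"
  show "brick_colour d r x \<in> {1..Suc d}"
    by (rule brick_colour_range)
  have "finite (brick d r x)" "real (card (brick d r x)) \<le> real (fact d * r ^ d)"
    using brick_card[OF r, of d x] by (simp_all only: of_nat_le_iff)
  then show "finite (colour_comp (Zsp d) (Ginf_adj d) (brick_colour d r) x)"
    "real (card (colour_comp (Zsp d) (Ginf_adj d) (brick_colour d r) x)) \<le> fact d * real r ^ d"
    using colour_comp_brick_colour[OF r x] by simp_all
next
  fix x y assume x: "x \<in> Zsp d" and y: "y \<in> Zsp d"
    and same: "brick_colour d r x = brick_colour d r y \<and>
      colour_comp (Zsp d) (Ginf_adj d) (brick_colour d r) x \<noteq> colour_comp (Zsp d) (Ginf_adj d) (brick_colour d r) y"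
  show "\<not> gdist_le (Zsp d) (Ginf_adj d) r x y"
  proof
    assume "gdist_le (Zsp d) (Ginf_adj d) r x y"
    then have "linf d x y \<le> int r"
      unfolding gdist_le_def using linf_le_walk_len by fastforce
    then have "\<forall>j\<le>d. brick_offset r y j = brick_offset r x j"
      using same by (intro brick_offset_eq_if_close[OF r]) simp_all
    then have "y \<in> colour_comp (Zsp d) (Ginf_adj d) (brick_colour d r) x"
      using y colour_comp_brick_colour[OF r x] by (simp add: brick_def)
    with same show False
      using colour_comp_eq[OF _ symp_Ginf_adj] by blast
  qed
qed

section \<open>The Hex theorem for cubical subdivisions\<close>

definition unit_cube :: "(real^'n) set" where
  "unit_cube = cbox 0 (\<chi> _. 1)"

lemma mem_unit_cube: "x \<in> unit_cube \<longleftrightarrow> (\<forall>s. 0 \<le> x $ s \<and> x $ s \<le> 1)"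
  by (simp add: unit_cube_def mem_box_cart)

text \<open>The fixed point of \<open>x \<mapsto> x - g x\<close>, clipped to the cube, is a zero of \<open>g\<close>.\<close>
lemma poincare_miranda:
  fixes g :: "real^'n \<Rightarrow> real^'n"
  assumes cont: "continuous_on unit_cube g"
    and face_0: "\<And>x i. x \<in> unit_cube \<Longrightarrow> x $ i = 0 \<Longrightarrow> g x $ i \<le> 0"
    and face_1: "\<And>x i. x \<in> unit_cube \<Longrightarrow> x $ i = 1 \<Longrightarrow> g x $ i \<ge> 0"
  obtains x where "x \<in> unit_cube" "g x = 0"
proof -
  define h where "h x = (\<chi> i. max 0 (min 1 (x $ i - g x $ i)))" for x
  have "continuous_on unit_cube h"
    unfolding h_def by (intro continuous_intros cont)
  moreover have "h \<in> unit_cube \<rightarrow> unit_cube"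
    by (auto simp: h_def mem_unit_cube)
  moreover have "compact (unit_cube :: (real^'n) set)" "convex (unit_cube :: (real^'n) set)"
    by (simp_all add: unit_cube_def)
  moreover have "(unit_cube :: (real^'n) set) \<noteq> {}"
    using mem_unit_cube[of 0] by auto
  ultimately obtain x where x: "x \<in> unit_cube" "h x = x"
    using brouwer[of unit_cube h] by blast
  have "g x $ i = 0" for i
  proof -
    have fix_i: "max 0 (min 1 (x $ i - g x $ i)) = x $ i"
      using arg_cong[OF x(2), of "\<lambda>v. v $ i"] by (simp add: h_def)
    have "0 \<le> x $ i" "x $ i \<le> 1"
      using x(1) by (simp_all add: mem_unit_cube)
    then consider "x $ i = 0" | "x $ i = 1" | "0 < x $ i \<and> x $ i < 1"
      by linarith
    then show ?thesis
      using fix_i face_0[OF x(1), of i] face_1[OF x(1), of i] by cases (auto simp: max_def min_def split: if_splits)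
  qed
  then have "g x = 0"
    by (simp add: vec_eq_iff)
  with x(1) show ?thesis
    using that by blast
qed

lemma closed_coordinate_hyperplane: "closed {z :: real^'n. z $ i = c}"
  by (intro closed_Collect_eq continuous_intros)

text \<open>If all \<open>X i \<inter> Y i\<close> were empty, \<open>x \<mapsto> (infdist x (X i) - infdist x (Y i))\<^sub>i\<close> would have a zero
  by Poincare-Miranda, and that zero would lie in no \<open>X i \<union> Y i\<close>.\<close>
lemma opposite_face_sets_meet:
  fixes X Y :: "'n::finite \<Rightarrow> (real^'n) set"
  assumes closed: "\<And>i. closed (X i)" "\<And>i. closed (Y i)"
    and face_0: "\<And>x i. x \<in> unit_cube \<Longrightarrow> x $ i = 0 \<Longrightarrow> x \<in> X i"
    and face_1: "\<And>x i. x \<in> unit_cube \<Longrightarrow> x $ i = 1 \<Longrightarrow> x \<in> Y i"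
    and cover: "\<And>x. x \<in> unit_cube \<Longrightarrow> \<exists>i. x \<in> X i \<union> Y i"
  shows "\<exists>i. X i \<inter> Y i \<noteq> {}"
proof (rule ccontr)
  assume "\<not> ?thesis"
  then have disjoint: "X i \<inter> Y i = {}" for i
    by blast
  have "0 \<in> X i" "(\<chi> _. 1) \<in> Y i" for i
    by (auto intro: face_0 face_1 simp: mem_unit_cube)
  then have nonempty: "X i \<noteq> {}" "Y i \<noteq> {}" for i
    by blast+
  define g where "g x = (\<chi> i. infdist x (X i) - infdist x (Y i))" for x :: "real^'n"
  have "continuous_on unit_cube g"
    unfolding g_def by (intro continuous_intros)
  moreover have "g x $ i \<le> 0" if "x \<in> unit_cube" "x $ i = 0" for x i
    using face_0[OF that] infdist_nonneg[of x "Y i"] by (simp add: g_def)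
  moreover have "g x $ i \<ge> 0" if "x \<in> unit_cube" "x $ i = 1" for x i
    using face_1[OF that] infdist_nonneg[of x "X i"] by (simp add: g_def)
  ultimately obtain x where x: "x \<in> unit_cube" "g x = 0"
    by (rule poincare_miranda)
  obtain i where "x \<in> X i \<union> Y i"
    using cover[OF x(1)] by blast
  moreover have "infdist x (X i) = infdist x (Y i)"
    using arg_cong[OF x(2), of "\<lambda>v. v $ i"] by (simp add: g_def)
  ultimately have "x \<in> X i \<inter> Y i"
    using in_closed_iff_infdist_zero[OF closed(1) nonempty(1), of x i]
      in_closed_iff_infdist_zero[OF closed(2) nonempty(2), of x i] by auto
  with disjoint show False
    by blast
qed

definition cube :: "nat \<Rightarrow> ('n::finite \<Rightarrow> nat) \<Rightarrow> (real^'n) set" where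
  "cube k a = cbox (\<chi> s. (real (a s) - 1) / real k) (\<chi> s. real (a s) / real k)"

definition grid :: "nat \<Rightarrow> ('n::finite \<Rightarrow> nat) set" where
  "grid k = {a. \<forall>s. 1 \<le> a s \<and> a s \<le> k}"

definition touching :: "('n \<Rightarrow> nat) \<Rightarrow> ('n \<Rightarrow> nat) \<Rightarrow> bool" where
  "touching a b \<longleftrightarrow> (\<forall>s. a s \<le> b s + 1 \<and> b s \<le> a s + 1)"

lemma cubes_eq_image_grid: "cubes k = cube k ` grid k"
  unfolding cubes_def cube_def grid_def by auto

lemma mem_cube:
  "x \<in> cube k a \<longleftrightarrow> (\<forall>s. (real (a s) - 1) / real k \<le> x $ s \<and> x $ s \<le> real (a s) / real k)"
  unfolding cube_def mem_box_cart by simp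

lemma mem_cube_scaled:
  assumes "k \<ge> 1"
  shows "x \<in> cube k a \<longleftrightarrow> (\<forall>s. real (a s) - 1 \<le> real k * x $ s \<and> real k * x $ s \<le> real (a s))"
  using assms unfolding mem_cube by (simp add: divide_le_eq le_divide_eq mult.commute)

lemma finite_grid: "finite (grid k :: ('n::finite \<Rightarrow> nat) set)"
proof -
  have "grid k = (PiE UNIV (\<lambda>_. {1..k}) :: ('n \<Rightarrow> nat) set)"
    by (auto simp: grid_def PiE_UNIV_domain)
  then show ?thesis
    by (simp add: finite_PiE)
qed

lemma closed_cube: "closed (cube k a)"
  unfolding cube_def by (rule closed_cbox)

lemma connected_cube: "connected (cube k a)"
  unfolding cube_def by (intro convex_connected convex_box)

lemma cube_nonempty: "cube k a \<noteq> {}"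
proof -
  have "(\<chi> s. (real (a s) - 1) / real k) \<in> cube k a"
    unfolding mem_cube by (auto intro: divide_right_mono)
  then show ?thesis by blast
qed

lemma touching_real:
  assumes "touching a b"
  shows "real (a s) \<le> real (b s) + 1" "real (b s) \<le> real (a s) + 1"
proof -
  have "a s \<le> b s + 1" "b s \<le> a s + 1"
    using assms unfolding touching_def by auto
  then show "real (a s) \<le> real (b s) + 1" "real (b s) \<le> real (a s) + 1"
    by linarith+
qed

lemma lower_corner_mem_cube_Int:
  assumes k: "k \<ge> 1" and ac: "touching a c"
  shows "(\<chi> s. (real (max (a s) (c s)) - 1) / real k) \<in> cube k a \<inter> cube k c"
proof -
  have "real (e s) - 1 \<le> real (max (a s) (c s)) - 1 \<and> real (max (a s) (c s)) - 1 \<le> real (e s)"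
    if "e = a \<or> e = c" for e s
    using touching_real[OF ac, of s] that by (auto simp: max_def)
  then show ?thesis
    using k unfolding Int_iff mem_cube_scaled[OF k] by simp
qed

lemma cube_Int_nonempty_iff:
  assumes k: "k \<ge> 1"
  shows "cube k a \<inter> cube k b \<noteq> {} \<longleftrightarrow> touching a b"
proof
  assume "cube k a \<inter> cube k b \<noteq> {}"
  then obtain x where "x \<in> cube k a" "x \<in> cube k b"
    by blast
  then have "real (a s) - 1 \<le> real (b s)" "real (b s) - 1 \<le> real (a s)" for s
    unfolding mem_cube_scaled[OF k] by (meson order_trans)+
  then have "real (a s) \<le> real (b s + 1)" "real (b s) \<le> real (a s + 1)" for s
    by (simp_all add: algebra_simps)
  then show "touching a b"
    unfolding touching_def of_nat_le_iff by blast
next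
  assume "touching a b"
  then show "cube k a \<inter> cube k b \<noteq> {}"
    using lower_corner_mem_cube_Int[OF k] by blast
qed

lemma cube_meets_face_0_iff:
  assumes k: "k \<ge> 1" and a: "a \<in> grid k"
  shows "(\<exists>z\<in>cube k a. z $ i = 0) \<longleftrightarrow> a i = 1"
proof
  assume "\<exists>z\<in>cube k a. z $ i = 0"
  then have "real (a i) - 1 \<le> 0"
    using mem_cube_scaled[OF k] by (metis mult_zero_right)
  then show "a i = 1"
    using a by (simp add: grid_def le_antisym)
next
  assume "a i = 1"
  then have "(\<chi> s. (real (a s) - 1) / real k) \<in> cube k a \<and> (\<chi> s. (real (a s) - 1) / real k) $ i = 0"
    unfolding mem_cube by (auto intro: divide_right_mono)
  then show "\<exists>z\<in>cube k a. z $ i = 0"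
    by blast
qed

lemma cube_meets_face_1_iff:
  assumes k: "k \<ge> 1" and a: "a \<in> grid k"
  shows "(\<exists>z\<in>cube k a. z $ i = 1) \<longleftrightarrow> a i = k"
proof
  assume "\<exists>z\<in>cube k a. z $ i = 1"
  then have "real k \<le> real (a i)"
    using mem_cube_scaled[OF k] by (metis mult_1_right)
  then show "a i = k"
    using a by (simp add: grid_def le_antisym)
next
  assume "a i = k"
  then have "(\<chi> s. real (a s) / real k) \<in> cube k a \<and> (\<chi> s. real (a s) / real k) $ i = 1"
    using k unfolding mem_cube by (auto intro: divide_right_mono)
  then show "\<exists>z\<in>cube k a. z $ i = 1"
    by blast
qed

lemma unit_cube_subset_cubes:
  assumes k: "k \<ge> 1" and x: "x \<in> unit_cube"
  obtains a where "a \<in> grid k" "x \<in> cube k a"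
proof -
  define a where "a s = max 1 (nat \<lceil>real k * x $ s\<rceil>)" for s
  have "1 \<le> a s \<and> a s \<le> k \<and> real (a s) - 1 \<le> real k * x $ s \<and> real k * x $ s \<le> real (a s)" for s
  proof -
    have "0 \<le> real k * x $ s" "real k * x $ s \<le> real k"
      using x k by (auto simp: mem_unit_cube mult_left_le)
    moreover have "real k * x $ s \<le> \<lceil>real k * x $ s\<rceil>" "\<lceil>real k * x $ s\<rceil> < real k * x $ s + 1"
      by linarith+
    ultimately show ?thesis
      using k by (auto simp: a_def of_nat_max ceiling_le_iff nat_le_iff le_max_iff_disj)
  qed
  then show ?thesis
    using that unfolding grid_def mem_cube_scaled[OF k] by blast
qed

definition hex_adj :: "nat \<Rightarrow> (('n::finite \<Rightarrow> nat) \<Rightarrow> 'n) \<Rightarrow> 'n \<Rightarrow> ('n \<Rightarrow> nat) \<Rightarrow> ('n \<Rightarrow> nat) \<Rightarrow> bool" where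
  "hex_adj k col i a b \<longleftrightarrow> a \<in> grid k \<and> b \<in> grid k \<and> col a = i \<and> col b = i \<and> touching a b"

lemma hex_adj_rtranclp_grid_colour:
  assumes "(hex_adj k col i)\<^sup>*\<^sup>* a0 a" "a0 \<in> grid k" "col a0 = i"
  shows "a \<in> grid k \<and> col a = i"
  using assms by (induction rule: rtranclp_induct) (auto simp: hex_adj_def)

definition hex_reach :: "nat \<Rightarrow> (('n::finite \<Rightarrow> nat) \<Rightarrow> 'n) \<Rightarrow> 'n \<Rightarrow> ('n \<Rightarrow> nat) set" where
  "hex_reach k col i = {a. \<exists>a0\<in>grid k. col a0 = i \<and> a0 i = 1 \<and> (hex_adj k col i)\<^sup>*\<^sup>* a0 a}"

lemma hex_reach_grid_colour: "a \<in> hex_reach k col i \<Longrightarrow> a \<in> grid k \<and> col a = i"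
  using hex_adj_rtranclp_grid_colour unfolding hex_reach_def by blast

lemma finite_hex_reach: "finite (hex_reach k col i)"
  by (rule finite_subset[OF _ finite_grid]) (use hex_reach_grid_colour in blast)

text \<open>The sets \<open>X\<close> and \<open>Y\<close> of the continuous version, built from the reachable cubes of colour \<open>i\<close>
  and from the remaining ones, can only meet in a reachable cube touching the face \<open>z$i = 1\<close>.\<close>
lemma hex_reach_meets_face_1:
  assumes k: "k \<ge> 1"
    and X: "z \<in> \<Union>(cube k ` hex_reach k col i) \<union> {z. z $ i = 0}"
    and Y: "z \<in> \<Union>(cube k ` {a \<in> grid k. col a = i \<and> a \<notin> hex_reach k col i}) \<union> {z. z $ i = 1}"
  shows "\<exists>a\<in>hex_reach k col i. a i = k"
proof (cases "z $ i = 0")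
  case True
  with Y obtain b where b: "b \<in> grid k" "col b = i" "b \<notin> hex_reach k col i" "z \<in> cube k b"
    by auto
  then have "b i = 1"
    using cube_meets_face_0_iff[OF k b(1), of i] True by blast
  with b show ?thesis
    by (auto simp: hex_reach_def)
next
  case False
  with X obtain a where a: "a \<in> hex_reach k col i" "z \<in> cube k a"
    by auto
  show ?thesis
  proof (cases "z $ i = 1")
    case True
    then show ?thesis
      using a cube_meets_face_1_iff[OF k, of a i] hex_reach_grid_colour by blast
  next
    case False
    with Y obtain b where b: "b \<in> grid k" "col b = i" "b \<notin> hex_reach k col i" "z \<in> cube k b"
      by auto
    then have "hex_adj k col i a b"
      using a hex_reach_grid_colour cube_Int_nonempty_iff[OF k, of a b] by (auto simp: hex_adj_def)
    then have "b \<in> hex_reach k col i"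
      using a(1) unfolding hex_reach_def by (blast intro: rtranclp.rtrancl_into_rtrancl)
    with b(3) show ?thesis
      by blast
  qed
qed

theorem hex_theorem:
  fixes col :: "('n::finite \<Rightarrow> nat) \<Rightarrow> 'n"
  assumes k: "k \<ge> 1"
  obtains i a0 a1 where "a0 \<in> grid k" "col a0 = i" "a0 i = 1" "a1 i = k" "(hex_adj k col i)\<^sup>*\<^sup>* a0 a1"
proof -
  define X where "X i = \<Union>(cube k ` hex_reach k col i) \<union> {z. z $ i = 0}" for i
  define Y where "Y i = \<Union>(cube k ` {a \<in> grid k. col a = i \<and> a \<notin> hex_reach k col i}) \<union> {z. z $ i = 1}"
    for i
  have "finite {a \<in> grid k. col a = i \<and> a \<notin> hex_reach k col i}" for i
    by (rule finite_subset[OF _ finite_grid]) auto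
  then have "closed (X i)" "closed (Y i)" for i
    unfolding X_def Y_def using finite_hex_reach
    by (auto intro!: closed_Un closed_Union closed_cube closed_coordinate_hyperplane finite_imageI)
  moreover have "\<exists>i. x \<in> X i \<union> Y i" if x: "x \<in> unit_cube" for x
  proof -
    obtain a where "a \<in> grid k" "x \<in> cube k a"
      using unit_cube_subset_cubes[OF k x] .
    then show ?thesis
      by (cases "a \<in> hex_reach k col (col a)") (auto simp: X_def Y_def)
  qed
  ultimately obtain i z where "z \<in> X i" "z \<in> Y i"
    using opposite_face_sets_meet[of X Y] by (auto simp: X_def Y_def)
  then have "\<exists>a\<in>hex_reach k col i. a i = k"
    unfolding X_def Y_def by (rule hex_reach_meets_face_1[OF k])
  then show ?thesis
    using that unfolding hex_reach_def by blast
qed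

lemma connected_UN_rtranclp:
  assumes conn: "\<And>a. connected (S a)" and meet: "\<And>a b. R a b \<Longrightarrow> S a \<inter> S b \<noteq> {}"
    and nonempty: "S a0 \<noteq> {}"
  shows "connected (\<Union>(S ` {a. R\<^sup>*\<^sup>* a0 a}))"
proof -
  define U where "U = \<Union>(S ` {a. R\<^sup>*\<^sup>* a0 a})"
  obtain x0 where x0: "x0 \<in> S a0"
    using nonempty by blast
  have "S a \<subseteq> connected_component_set U x0" if "R\<^sup>*\<^sup>* a0 a" for a
    using that
  proof (induction rule: rtranclp_induct)
    case base
    show ?case
      using x0 conn by (intro connected_component_maximal) (auto simp: U_def)
  next
    case (step a b)
    then obtain y where y: "y \<in> S a" "y \<in> S b"
      using meet by blast
    have "S b \<subseteq> U"
      using step(1,2) unfolding U_def by (blast intro: rtranclp.rtrancl_into_rtrancl)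
    then have "S b \<subseteq> connected_component_set U y"
      using y(2) conn by (intro connected_component_maximal)
    moreover have "connected_component_set U y = connected_component_set U x0"
      using step.IH y(1) by (metis connected_component_eq subsetD)
    ultimately show ?case
      by simp
  qed
  then have "connected_component_set U x0 = U"
    using connected_component_subset unfolding U_def by blast
  then show ?thesis
    unfolding U_def by (metis connected_connected_component)
qed

lemma connects_faces_hex_chain:
  assumes k: "k \<ge> 1" and a0: "a0 \<in> grid k" "col a0 = i" "a0 i = 1"
    and a1: "a1 i = k" "(hex_adj k col i)\<^sup>*\<^sup>* a0 a1"
  shows "connects_faces (\<Union>(cube k ` {a. (hex_adj k col i)\<^sup>*\<^sup>* a0 a}))"
  unfolding connects_faces_def
proof (intro conjI exI)
  show "connected (\<Union>(cube k ` {a. (hex_adj k col i)\<^sup>*\<^sup>* a0 a}))"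
    using cube_Int_nonempty_iff[OF k] by (intro connected_UN_rtranclp connected_cube cube_nonempty)
      (auto simp: hex_adj_def)
  show "\<exists>z\<in>\<Union>(cube k ` {a. (hex_adj k col i)\<^sup>*\<^sup>* a0 a}). z $ i = 0"
    using cube_meets_face_0_iff[OF k a0(1)] a0(3) by blast
  have "a1 \<in> grid k"
    using hex_adj_rtranclp_grid_colour[OF a1(2) a0(1,2)] by blast
  then show "\<exists>z\<in>\<Union>(cube k ` {a. (hex_adj k col i)\<^sup>*\<^sup>* a0 a}). z $ i = 1"
    using cube_meets_face_1_iff[OF k] a1 by blast
qed

section \<open>Images of touching cubes under a map that is Lipschitz across \<open>m\<close>-faces\<close>

lemma aff_dim_ge_card_axes:
  fixes S :: "(real^'n::finite) set"
  assumes "p \<in> S" "c \<noteq> 0" "\<And>s. s \<in> G \<Longrightarrow> p + c *\<^sub>R axis s 1 \<in> S"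
  shows "int (card G) \<le> aff_dim S"
proof -
  define T where "T = (\<lambda>x. x - p) ` S"
  have "axis s 1 \<in> span T" if "s \<in> G" for s
  proof -
    have "c *\<^sub>R axis s 1 \<in> T"
      unfolding T_def using assms(3)[OF that] by force
    then have "inverse c *\<^sub>R (c *\<^sub>R axis s 1) \<in> span T"
      by (intro span_mul span_base)
    with assms(2) show ?thesis
      by simp
  qed
  moreover have "independent ((\<lambda>s. axis s (1::real)) ` G)"
    by (rule independent_mono[OF independent_Basis]) (auto simp: Basis_vec_def)
  ultimately have "card ((\<lambda>s. axis s (1::real)) ` G) \<le> dim (span T)"
    by (intro independent_card_le_dim) auto
  moreover have "inj_on (\<lambda>s. axis s (1::real)) G"
    by (rule inj_onI) (simp add: axis_eq_axis)
  moreover have "aff_dim S = int (dim T)"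
    unfolding T_def by (rule aff_dim_eq_dim_subtract) (rule hull_inc[OF assms(1)])
  ultimately show ?thesis
    by (simp add: card_image dim_span)
qed

text \<open>The common face of two touching cubes extends in every direction in which they agree.\<close>
lemma aff_dim_cube_Int_ge:
  fixes a c :: "'n::finite \<Rightarrow> nat"
  assumes k: "k \<ge> 1" and ac: "touching a c"
  shows "int CARD('n) - int (card {s. a s \<noteq> c s}) \<le> aff_dim (cube k a \<inter> cube k c)"
proof -
  define p :: "real^'n" where "p = (\<chi> s. (real (max (a s) (c s)) - 1) / real k)"
  have p: "p \<in> cube k a \<inter> cube k c"
    unfolding p_def by (rule lower_corner_mem_cube_Int[OF k ac])
  have scaled: "real k * (p + (1 / real k) *\<^sub>R axis s 1) $ t
      = real (max (a t) (c t)) - 1 + (if t = s then 1 else 0)" for s t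
    using k by (auto simp: p_def axis_def field_simps)
  have max_le: "real (max (a t) (c t)) - 1 \<le> real (e t)" if "e = a \<or> e = c" for e t
    using touching_real[OF ac, of t] that by (auto simp: max_def)
  have "p + (1 / real k) *\<^sub>R axis s 1 \<in> cube k e" if "a s = c s" "e = a \<or> e = c" for s e
    unfolding mem_cube_scaled[OF k] scaled using max_le[OF that(2)] that by auto
  then have "int (card {s. a s = c s}) \<le> aff_dim (cube k a \<inter> cube k c)"
    using k by (intro aff_dim_ge_card_axes[where c = "1 / real k", OF p]) auto
  moreover have "{s. a s = c s} = UNIV - {s. a s \<noteq> c s}"
    by blast
  then have "card {s. a s = c s} = CARD('n) - card {s. a s \<noteq> c s}"
    by (simp add: card_Diff_subset)
  moreover have "card {s. a s \<noteq> c s} \<le> CARD('n)"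
    by (rule card_mono) auto
  ultimately show ?thesis
    by linarith
qed

lemma touching_interpolate:
  assumes "a \<in> grid k" "b \<in> grid k" "touching a b" "D \<subseteq> {s. a s \<noteq> b s}"
  obtains c where "c \<in> grid k" "touching a c" "touching c b"
    "{s. a s \<noteq> c s} = D" "{s. c s \<noteq> b s} = {s. a s \<noteq> b s} - D"
proof
  let ?c = "\<lambda>s. if s \<in> D then b s else a s"
  show "?c \<in> grid k" "touching a ?c" "touching ?c b"
    using assms(1-3) by (auto simp: grid_def touching_def)
  show "{s. a s \<noteq> ?c s} = D" "{s. ?c s \<noteq> b s} = {s. a s \<noteq> b s} - D"
    using assms(4) by auto
qed

lemma linf_le_if_coordinate_steps:
  fixes G :: "('n::finite \<Rightarrow> nat) \<Rightarrow> nat \<Rightarrow> int"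
  assumes one_step: "\<And>a b. a \<in> grid k \<Longrightarrow> b \<in> grid k \<Longrightarrow> touching a b \<Longrightarrow>
      card {s. a s \<noteq> b s} \<le> c \<Longrightarrow> linf d (G a) (G b) \<le> 1"
    and "a \<in> grid k" "b \<in> grid k" "touching a b" "card {s. a s \<noteq> b s} \<le> t * c"
  shows "linf d (G a) (G b) \<le> int t"
  using assms(2,4,5)
proof (induction t arbitrary: a)
  case 0
  then have "a = b"
    by auto
  then show ?case
    by simp
next
  case (Suc t)
  show ?case
  proof (cases "card {s. a s \<noteq> b s} \<le> c")
    case True
    then show ?thesis
      using one_step[OF Suc.prems(1) assms(3) Suc.prems(2)] by simp
  next
    case False
    then obtain D where D: "D \<subseteq> {s. a s \<noteq> b s}" "card D = c"
      by (meson nle_le obtain_subset_with_card_n)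
    then obtain a' where a': "a' \<in> grid k" "touching a a'" "touching a' b"
      "{s. a s \<noteq> a' s} = D" "{s. a' s \<noteq> b s} = {s. a s \<noteq> b s} - D"
      using touching_interpolate[OF Suc.prems(1) assms(3) Suc.prems(2)] by blast
    have "card {s. a' s \<noteq> b s} \<le> t * c"
      using Suc.prems(3) D a'(5) by (simp add: card_Diff_subset)
    then have "linf d (G a') (G b) \<le> int t"
      using Suc.IH a'(1,3) by blast
    moreover have "linf d (G a) (G a') \<le> 1"
      using one_step[OF Suc.prems(1) a'(1,2)] a'(4) D(2) by simp
    ultimately show ?thesis
      using linf_triangle[of d "G a" "G b" "G a'"] by simp
  qed
qed

text \<open>Two touching cubes differ in at most \<open>CARD('n)\<close> coordinates.  Changing at most
  \<open>CARD('n) - m\<close> of them at a time passes through \<open>m + 1\<close> cubes, each sharing a face of dimension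
  \<open>\<ge> m\<close> with the previous one.\<close>
lemma linf_le_if_touching:
  fixes F :: "(real^'n::finite) set \<Rightarrow> nat \<Rightarrow> int"
  assumes k: "k \<ge> 1" and m: "m < CARD('n)"
    and lip: "\<forall>K1\<in>cubes k. \<forall>K2\<in>cubes k. int m \<le> aff_dim (K1 \<inter> K2) \<longrightarrow> linf d (F K1) (F K2) \<le> 1"
    and ab: "a \<in> grid k" "b \<in> grid k" "touching a b"
  shows "linf d (F (cube k a)) (F (cube k b)) \<le> int (m + 1)"
proof (rule linf_le_if_coordinate_steps[where c = "CARD('n) - m", OF _ ab])
  fix a b :: "'n \<Rightarrow> nat"
  assume "a \<in> grid k" "b \<in> grid k" "touching a b" "card {s. a s \<noteq> b s} \<le> CARD('n) - m"
  moreover from this have "int m \<le> aff_dim (cube k a \<inter> cube k b)"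
    using aff_dim_cube_Int_ge[OF k, of a b] m by linarith
  ultimately show "linf d (F (cube k a)) (F (cube k b)) \<le> 1"
    using lip by (auto simp: cubes_eq_image_grid)
next
  obtain j where "CARD('n) = m + 1 + j"
    using m less_iff_Suc_add[of m "CARD('n)"] by auto
  then have "CARD('n) \<le> (m + 1) * (CARD('n) - m)"
    by (simp add: algebra_simps)
  moreover have "card {s. a s \<noteq> b s} \<le> CARD('n)"
    by (rule card_mono) auto
  ultimately show "card {s. a s \<noteq> b s} \<le> (m + 1) * (CARD('n) - m)"
    by linarith
qed

lemma hex_adj_images_same_cluster:
  fixes F :: "(real^'n::finite) set \<Rightarrow> nat \<Rightarrow> int" and h :: "nat \<Rightarrow> 'n"
  defines "d \<equiv> CARD('n) - 1"
  assumes k: "k \<ge> 1" and m: "m < CARD('n)"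
    and col: "clustered_col (Zsp d) (Ginf_adj d) (m + 1) N K f" and h: "inj_on h {1..N}"
    and F: "\<forall>a\<in>grid k. F (cube k a) \<in> Zsp d"
    and lip: "\<forall>K1\<in>cubes k. \<forall>K2\<in>cubes k. int m \<le> aff_dim (K1 \<inter> K2) \<longrightarrow> linf d (F K1) (F K2) \<le> 1"
    and "hex_adj k (\<lambda>a. h (f (F (cube k a)))) i a b"
  shows "F (cube k b) \<in> colour_comp (Zsp d) (Ginf_adj d) f (F (cube k a))"
proof -
  have ab: "a \<in> grid k" "b \<in> grid k" "touching a b" "h (f (F (cube k a))) = h (f (F (cube k b)))"
    using assms(8) by (auto simp: hex_adj_def)
  then have "f (F (cube k a)) = f (F (cube k b))"
    using inj_onD[OF h ab(4)] clustered_colD(2)[OF col] F by blast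
  moreover have "gdist_le (Zsp d) (Ginf_adj d) (m + 1) (F (cube k a)) (F (cube k b))"
    using F ab linf_le_if_touching[OF k m lip ab(1-3)] by (intro gdist_le_if_linf_le) auto
  ultimately show ?thesis
    using F ab by (intro clustered_col_close_in_colour_comp[OF col]) auto
qed

text \<open>Colour each cube by the cluster colour of its image; the Hex theorem gives a chain of touching
  cubes of one colour crossing the cube, and consecutive images stay in one cluster.\<close>
lemma Chat_ok_if_clustered_col:
  fixes f :: "(nat \<Rightarrow> int) \<Rightarrow> nat"
  assumes m: "m < CARD('n::finite)"
    and col: "clustered_col (Zsp (CARD('n) - 1)) (Ginf_adj (CARD('n) - 1)) (m + 1) CARD('n) K f"
  shows "Chat_ok TYPE('n) m K"
  unfolding Chat_ok_def
proof (intro conjI allI impI)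
  define d where "d = CARD('n) - 1"
  show "K > 0"
    using clustered_colD(1)[OF col] .
  fix k :: nat and F :: "(real^'n) set \<Rightarrow> nat \<Rightarrow> int"
  assume k: "k \<ge> 1"
    and "(\<forall>K\<in>cubes k. F K \<in> Zsp (CARD('n) - 1)) \<and>
      (\<forall>K1\<in>cubes k. \<forall>K2\<in>cubes k. int m \<le> aff_dim (K1 \<inter> K2) \<longrightarrow>
         linf (CARD('n) - 1) (F K1) (F K2) \<le> 1)"
  then have F: "\<forall>a\<in>grid k. F (cube k a) \<in> Zsp (CARD('n) - 1)"
    and lip: "\<forall>K1\<in>cubes k. \<forall>K2\<in>cubes k. int m \<le> aff_dim (K1 \<inter> K2) \<longrightarrow>
      linf (CARD('n) - 1) (F K1) (F K2) \<le> 1"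
    unfolding cubes_eq_image_grid by auto
  obtain h :: "nat \<Rightarrow> 'n" where h: "inj_on h {1..CARD('n)}"
    using ex_bij_betw_nat_finite_1[of "UNIV :: 'n set"] bij_betw_imp_inj_on by auto
  define cube_col where "cube_col = (\<lambda>a. h (f (F (cube k a))))"
  obtain i a0 a1 where a0: "a0 \<in> grid k" "cube_col a0 = i" "a0 i = 1"
    and a1: "a1 i = k" "(hex_adj k cube_col i)\<^sup>*\<^sup>* a0 a1"
    using hex_theorem[OF k] by blast
  define P where "P = colour_comp (Zsp d) (Ginf_adj d) f (F (cube k a0))"
  have step: "F (cube k b) \<in> colour_comp (Zsp d) (Ginf_adj d) f (F (cube k a))"
    if "hex_adj k cube_col i a b" for a b
    using hex_adj_images_same_cluster[OF k m col h F lip that[unfolded cube_col_def]]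
    unfolding d_def .
  have in_P: "F (cube k a) \<in> P" if "(hex_adj k cube_col i)\<^sup>*\<^sup>* a0 a" for a
    unfolding P_def
    by (rule rtranclp_image_in_colour_comp[where g = "\<lambda>a. F (cube k a)", OF that _ step])
      (use F a0(1) d_def in auto)
  have "P \<subseteq> Zsp d"
    unfolding P_def by (auto dest: colour_compD)
  moreover have "finite P" "real (card P) \<le> K"
    unfolding P_def d_def using clustered_colD(3,4)[OF col] F a0(1) by simp_all
  moreover have "cube k ` {a. (hex_adj k cube_col i)\<^sup>*\<^sup>* a0 a} \<subseteq> cubes k"
    using hex_adj_rtranclp_grid_colour[where col = cube_col, OF _ a0(1,2)]
    by (auto simp: cubes_eq_image_grid)
  ultimately show "\<exists>P. P \<subseteq> Zsp (CARD('n) - 1) \<and> one_connected (CARD('n) - 1) P \<and>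
      finite P \<and> real (card P) \<le> K \<and>
      (\<exists>S. S \<subseteq> cubes k \<and> (\<forall>K\<in>S. F K \<in> P) \<and> connects_faces (\<Union>S))"
    using connects_faces_hex_chain[OF k a0 a1] in_P one_connected_colour_comp[of d "Zsp d" f]
    unfolding P_def d_def by blast
qed

section \<open>Fewer than \<open>d + 1\<close> colours leave unbounded clusters in \<open>\<int>\<^sup>d\<close>\<close>

lemma rtranclp_intermediate_value:
  fixes \<phi> :: "'a \<Rightarrow> nat"
  assumes "R\<^sup>*\<^sup>* x y" "\<And>a b. R a b \<Longrightarrow> \<phi> b \<le> \<phi> a + 1" "\<phi> x \<le> v" "v \<le> \<phi> y"
  shows "\<exists>z. R\<^sup>*\<^sup>* x z \<and> \<phi> z = v"
  using assms(1,4)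
proof (induction rule: rtranclp_induct)
  case base
  then show ?case
    using assms(3) by auto
next
  case (step y z)
  show ?case
  proof (cases "v \<le> \<phi> y")
    case True
    with step.IH show ?thesis by blast
  next
    case False
    then have "\<phi> z = v"
      using assms(2)[OF step(2)] step.prems by linarith
    with step(1,2) show ?thesis
      by (blast intro: rtranclp.rtrancl_into_rtrancl)
  qed
qed

definition grid_proj :: "nat \<Rightarrow> (nat \<Rightarrow> 'n) \<Rightarrow> ('n \<Rightarrow> nat) \<Rightarrow> nat \<Rightarrow> int" where
  "grid_proj d \<sigma> a = (\<lambda>t. if t < d then int (a (\<sigma> t)) else 0)"

lemma grid_proj_in_Zsp: "grid_proj d \<sigma> a \<in> Zsp d"
  by (simp add: grid_proj_def Zsp_def)

lemma linf_grid_proj_le_1: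
  assumes "touching a b"
  shows "linf d (grid_proj d \<sigma> a) (grid_proj d \<sigma> b) \<le> 1"
proof -
  have "\<bar>grid_proj d \<sigma> a t - grid_proj d \<sigma> b t\<bar> \<le> 1" for t
    using assms unfolding touching_def grid_proj_def by (cases "t < d") (auto dest: spec[of _ "\<sigma> t"])
  then show ?thesis
    by (simp add: linf_le_iff)
qed

text \<open>Colour the cubes of the \<open>k\<close>-subdivision of \<open>[0, 1]\<^sup>d\<^sup>+\<^sup>1\<close> through the projection that forgets a
  direction \<open>j0\<close> never used as a colour.  A monochromatic Hex chain in a direction \<open>i \<noteq> j0\<close> projects
  into a single component, whose \<open>i\<close>-coordinates take all values \<open>1, \<dots>, k\<close>.\<close>
lemma long_colour_comp_if_few_colours:
  fixes f :: "(nat \<Rightarrow> int) \<Rightarrow> nat"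
  defines "d \<equiv> CARD('n::finite) - 1"
  assumes colours: "\<forall>x\<in>Zsp d. f x \<in> {1..d}" and k: "k \<ge> 1"
  obtains x t where "x \<in> Zsp d" "int ` {1..k} \<subseteq> (\<lambda>p. p t) ` colour_comp (Zsp d) (Ginf_adj d) f x"
proof -
  define j0 :: 'n where "j0 = undefined"
  obtain \<sigma> :: "nat \<Rightarrow> 'n" where \<sigma>: "bij_betw \<sigma> {0..<d} (UNIV - {j0})"
    using ex_bij_betw_nat_finite[of "UNIV - {j0}"] by (auto simp: card_Diff_singleton d_def)
  let ?\<pi> = "grid_proj d \<sigma>"
  have "f (?\<pi> a) \<in> {1..d}" for a
    using colours grid_proj_in_Zsp by blast
  then have range: "f (?\<pi> a) - 1 \<in> {0..<d}" "1 \<le> f (?\<pi> a)" for a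
    by (auto simp: less_eq_Suc_le)
  define cube_col where "cube_col a = \<sigma> (f (?\<pi> a) - 1)" for a
  obtain i a0 a1 where a0: "a0 \<in> grid k" "cube_col a0 = i" "a0 i = 1"
    and a1: "a1 i = k" "(hex_adj k cube_col i)\<^sup>*\<^sup>* a0 a1"
    using hex_theorem[OF k] by blast
  obtain t0 where t0: "t0 < d" "\<sigma> t0 = i"
    using a0(2) range(1)[of a0] unfolding cube_col_def by auto
  have step: "?\<pi> b \<in> colour_comp (Zsp d) (Ginf_adj d) f (?\<pi> a)" if "hex_adj k cube_col i a b" for a b
  proof -
    have ab: "touching a b" "\<sigma> (f (?\<pi> a) - 1) = \<sigma> (f (?\<pi> b) - 1)"
      using that by (auto simp: hex_adj_def cube_col_def)
    then have "f (?\<pi> a) - 1 = f (?\<pi> b) - 1"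
      using \<sigma> range(1) unfolding bij_betw_def by (blast dest: inj_onD)
    then have "f (?\<pi> b) = f (?\<pi> a)"
      using range(2)[of a] range(2)[of b] by linarith
    then show ?thesis
      using grid_proj_in_Zsp linf_grid_proj_le_1[OF ab(1)] by (intro colour_comp_if_linf_le_1)
  qed
  have "int ` {1..k} \<subseteq> (\<lambda>p. p t0) ` colour_comp (Zsp d) (Ginf_adj d) f (?\<pi> a0)"
  proof
    fix y assume "y \<in> int ` {1..k}"
    then obtain v where v: "1 \<le> v" "v \<le> k" "y = int v"
      by auto
    have "\<And>a b. hex_adj k cube_col i a b \<Longrightarrow> b i \<le> a i + 1"
      by (simp add: hex_adj_def touching_def)
    then have "\<exists>b. (hex_adj k cube_col i)\<^sup>*\<^sup>* a0 b \<and> b i = v"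
      using a0(3) a1(1) v(1,2) by (intro rtranclp_intermediate_value[OF a1(2)]) auto
    then obtain b where b: "(hex_adj k cube_col i)\<^sup>*\<^sup>* a0 b" "b i = v"
      by blast
    then have "?\<pi> b t0 = y"
      using t0 v(3) by (simp add: grid_proj_def)
    moreover have "?\<pi> b \<in> colour_comp (Zsp d) (Ginf_adj d) f (?\<pi> a0)"
      using rtranclp_image_in_colour_comp[where g = ?\<pi>, OF b(1) grid_proj_in_Zsp step] .
    ultimately show "y \<in> (\<lambda>p. p t0) ` colour_comp (Zsp d) (Ginf_adj d) f (?\<pi> a0)"
      by (metis image_eqI)
  qed
  then show ?thesis
    using that grid_proj_in_Zsp by blast
qed

lemma clustered_col_Ginf_colours_ge:
  fixes f :: "(nat \<Rightarrow> int) \<Rightarrow> nat"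
  assumes col: "clustered_col (Zsp (CARD('n::finite) - 1)) (Ginf_adj (CARD('n) - 1)) r N K f"
  shows "CARD('n) \<le> N"
proof (rule ccontr)
  assume "\<not> CARD('n) \<le> N"
  then have "\<forall>x\<in>Zsp (CARD('n) - 1). f x \<in> {1..CARD('n) - 1}"
    using clustered_colD(2)[OF col] by fastforce
  moreover define k where "k = nat \<lceil>K\<rceil> + 1"
  then have "k \<ge> 1"
    by simp
  ultimately obtain x t where x: "x \<in> Zsp (CARD('n) - 1)"
    and long: "int ` {1..k} \<subseteq> (\<lambda>p. p t) ` colour_comp (Zsp (CARD('n) - 1)) (Ginf_adj (CARD('n) - 1)) f x"
    by (rule long_colour_comp_if_few_colours[where 'n = 'n])
  have "k = card (int ` {1..k})"
    by (simp add: card_image)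
  also have "\<dots> \<le> card ((\<lambda>p. p t) ` colour_comp (Zsp (CARD('n) - 1)) (Ginf_adj (CARD('n) - 1)) f x)"
    by (intro card_mono finite_imageI clustered_colD(3)[OF col x] long)
  also have "\<dots> \<le> card (colour_comp (Zsp (CARD('n) - 1)) (Ginf_adj (CARD('n) - 1)) f x)"
    by (rule card_image_le[OF clustered_colD(3)[OF col x]])
  finally have "real k \<le> K"
    using clustered_colD(4)[OF col x] by linarith
  then show False
    unfolding k_def by linarith
qed

lemma chi_star_Ginf:
  assumes "r \<ge> 1"
  shows "chi_star (Zsp (CARD('n::finite) - 1)) (Ginf_adj (CARD('n) - 1)) r = CARD('n)"
  unfolding chi_star_def
proof (rule Least_equality)
  show "\<exists>K f. clustered_col (Zsp (CARD('n) - 1)) (Ginf_adj (CARD('n) - 1)) r CARD('n) K f"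
    using brick_colour_clustered[OF assms, of "CARD('n) - 1"] by auto
qed (use clustered_col_Ginf_colours_ge in blast)

lemma bdd_below_Khat_ok: "bdd_below {K. Khat_ok V E m K}"
  unfolding Khat_ok_def by (rule bdd_belowI[of _ 0]) (auto dest: clustered_colD(1))

lemma bdd_below_Chat_ok: "bdd_below {C. Chat_ok T m C}"
  unfolding Chat_ok_def by (rule bdd_belowI[of _ 0]) auto

theorem corollary4p1:
  fixes m :: nat
  assumes "m \<le> CARD('n::finite) - 1"
  shows "(\<exists>C. Chat_ok TYPE('n) m C) \<and>
         (\<exists>K. Khat_ok (Zsp (CARD('n) - 1)) (Ginf_adj (CARD('n) - 1)) (m + 1) K) \<and>
         Chat TYPE('n) m \<le> Khat (Zsp (CARD('n) - 1)) (Ginf_adj (CARD('n) - 1)) (m + 1) \<and>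
         Khat (Zsp (CARD('n) - 1)) (Ginf_adj (CARD('n) - 1)) (m + 1)
           \<le> fact (CARD('n) - 1) * (real m + 1) ^ (CARD('n) - 1)"
proof -
  define d where "d = CARD('n) - 1"
  define K0 where "K0 = fact d * (real m + 1) ^ d"
  have "0 < CARD('n)"
    by simp
  then have m: "m < CARD('n)" and n: "Suc d = CARD('n)"
    using assms unfolding d_def by linarith+
  have "chi_star (Zsp d) (Ginf_adj d) (m + 1) = CARD('n)"
    unfolding d_def by (rule chi_star_Ginf) simp
  then have Khat_ok_iff: "Khat_ok (Zsp d) (Ginf_adj d) (m + 1) K \<longleftrightarrow>
      (\<exists>f. clustered_col (Zsp d) (Ginf_adj d) (m + 1) CARD('n) K f)" for K
    unfolding Khat_ok_def by simp
  have "clustered_col (Zsp d) (Ginf_adj d) (m + 1) CARD('n) K0 (brick_colour d (m + 1))"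
    using brick_colour_clustered[of "m + 1" d] n unfolding K0_def by (simp add: add.commute)
  then have K0: "Khat_ok (Zsp d) (Ginf_adj d) (m + 1) K0"
    unfolding Khat_ok_iff by blast
  have Chat_ok: "Chat_ok TYPE('n) m K" if "Khat_ok (Zsp d) (Ginf_adj d) (m + 1) K" for K
    using that Chat_ok_if_clustered_col[OF m] unfolding Khat_ok_iff unfolding d_def by blast
  have "Chat TYPE('n) m \<le> Khat (Zsp d) (Ginf_adj d) (m + 1)"
    unfolding Chat_def Khat_def using K0 Chat_ok bdd_below_Chat_ok by (intro cInf_superset_mono) auto
  moreover have "Khat (Zsp d) (Ginf_adj d) (m + 1) \<le> K0"
    unfolding Khat_def using K0 bdd_below_Khat_ok by (intro cInf_lower) auto
  ultimately show ?thesis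
    using K0 Chat_ok unfolding K0_def d_def by blast
qed

end
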